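(* Splitting forcing $\mathbb{SP}$ is weighted: for every $T\in\mathbb{SP}$ there is a weight $\rho$ on $T$ such that every tree $S$ with $S\le_\rho T$ belongs to $\mathbb{SP}$.
   Context: $S\subseteq 2^{<\omega}$ is fat if there is $m\in\omega$ such that for every $n\ge m$ there are $s,t\in S$ with $s(n)=0,t(n)=1$. For a tree $T\subseteq 2^{<\omega}$ and $s\in T$, $T_s=\{t\in T:t\subseteq s\text{ or }s\subseteq t\}$. $T$ is a splitting tree if $T_s$ is fat for every $s\in T$; $\mathbb{SP}$ is the set of splitting trees ordered by inclusion. A weight on a perfect tree $T$ is a map $\rho:T\times T\to[T]^{<\omega}$ with $\rho(s,t)\subseteq T_s\setminus T_t$ for all $s,t\in T$. For a tree $S$, $S\le_\rho T$ means $S\subseteq T$ and the set of $s_0\in S$ for which there is an injective sequence $(s_n)_{n\in\omega}$ in $S_{s_0}$ (starting at $s_0$) with $\rho(s_n,s_{n+1})\subseteq S$ for all $n$ is dense in $S$ (every node of $S$ has an extension in this set). *)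

theory Defs
  imports Main "HOL-Library.Sublist"
begin

text \<open>Elements of 2^{<omega} are finite binary sequences, represented as bool lists
  (False = 0, True = 1); s(n) is s ! n for n < length s; t extends s iff prefix s t.\<close>

definition is_tree :: "bool list set \<Rightarrow> bool" where
  "is_tree T \<longleftrightarrow> T \<noteq> {} \<and> (\<forall>t\<in>T. \<forall>s. prefix s t \<longrightarrow> s \<in> T)"

definition fat :: "bool list set \<Rightarrow> bool" where
  "fat S \<longleftrightarrow> (\<exists>m::nat. \<forall>n\<ge>m. \<exists>s\<in>S. \<exists>t\<in>S.
      n < length s \<and> s ! n = False \<and> n < length t \<and> t ! n = True)"

definition subtree_at :: "bool list set \<Rightarrow> bool list \<Rightarrow> bool list set" where
  "subtree_at T s = {t \<in> T. prefix t s \<or> prefix s t}"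

definition splitting_tree :: "bool list set \<Rightarrow> bool" where
  "splitting_tree T \<longleftrightarrow> is_tree T \<and> (\<forall>s\<in>T. fat (subtree_at T s))"

definition SP :: "bool list set set" where
  "SP = {T. splitting_tree T}"

definition perfect_tree :: "bool list set \<Rightarrow> bool" where
  "perfect_tree T \<longleftrightarrow> is_tree T \<and>
     (\<forall>s\<in>T. \<exists>t\<in>T. \<exists>u\<in>T. prefix s t \<and> prefix s u \<and> \<not> prefix t u \<and> \<not> prefix u t)"

definition is_weight :: "bool list set \<Rightarrow> (bool list \<Rightarrow> bool list \<Rightarrow> bool list set) \<Rightarrow> bool" where
  "is_weight T \<rho> \<longleftrightarrow> perfect_tree T \<and>
     (\<forall>s\<in>T. \<forall>t\<in>T. finite (\<rho> s t) \<and> \<rho> s t \<subseteq> subtree_at T s - subtree_at T t)"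

definition weight_le :: "bool list set \<Rightarrow> (bool list \<Rightarrow> bool list \<Rightarrow> bool list set) \<Rightarrow> bool list set \<Rightarrow> bool" where
  "weight_le S \<rho> T \<longleftrightarrow> S \<subseteq> T \<and>
     (let D = {s0 \<in> S. \<exists>f :: nat \<Rightarrow> bool list. inj f \<and> f 0 = s0 \<and>
                 (\<forall>n. f n \<in> subtree_at S s0) \<and> (\<forall>n. \<rho> (f n) (f (Suc n)) \<subseteq> S)}
      in \<forall>s\<in>S. \<exists>t\<in>D. prefix s t)"

end

theory Submission
  imports Defs
begin

text \<open>The weight \<open>\<rho>(a, b)\<close> records, for every prefix \<open>u\<close> of \<open>b\<close>, every level \<open>k\<close> below
  the fatness threshold of \<open>T\<^sub>b\<close> and every bit \<open>c\<close>, one node of \<open>T\<^sub>a \<inter> T\<^sub>u\<close> outside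
  \<open>T\<^sub>b\<close> with value \<open>c\<close> at \<open>k\<close>, if there is one.
  Now let \<open>f\<close> be an injective sequence through \<open>S\<^sub>t\<close> starting at \<open>t\<close> with
  \<open>\<rho>(f n, f (n+1)) \<subseteq> S\<close>, and fix a bit \<open>c\<close> and a level \<open>k\<close> beyond \<open>|t|\<close> and the
  threshold of \<open>T\<^sub>t\<close>. Follow along \<open>f\<close> whether the nodes of \<open>T\<^sub>t\<close> comparable with
  \<open>f n\<close> still take value \<open>c\<close> at \<open>k\<close>. As long as they do, \<open>f n\<close> itself takes value \<open>c\<close>
  at \<open>k\<close> once \<open>|f n| > k\<close>, which happens by injectivity. If the property is lost from
  \<open>a = f j\<close> to \<open>b = f (j+1)\<close>, then \<open>T\<^sub>b\<close> does not split at \<open>k\<close>, so \<open>k\<close> is below its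
  threshold and \<open>\<rho>(a, b) \<subseteq> S\<close> contains a node of \<open>S\<^sub>t\<close> with value \<open>c\<close> at \<open>k\<close>.\<close>

definition takes_value :: "bool list set \<Rightarrow> nat \<Rightarrow> bool \<Rightarrow> bool" where
  "takes_value X k c \<longleftrightarrow> (\<exists>w\<in>X. k < length w \<and> w ! k = c)"

lemma takes_value_mono: "takes_value X k c \<Longrightarrow> X \<subseteq> Y \<Longrightarrow> takes_value Y k c"
  unfolding takes_value_def by blast

lemma fat_iff_takes_value: "fat X \<longleftrightarrow> (\<exists>m. \<forall>n\<ge>m. \<forall>c. takes_value X n c)"
  unfolding fat_def takes_value_def all_bool_eq by blast

lemma fat_mono: "fat X \<Longrightarrow> X \<subseteq> Y \<Longrightarrow> fat Y"
  unfolding fat_def by (meson subsetD)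

lemma prefix_nth_eq: "prefix xs ys \<Longrightarrow> n < length xs \<Longrightarrow> ys ! n = xs ! n"
  by (auto simp: prefix_def nth_append)

lemma subtree_at_antimono: "prefix s t \<Longrightarrow> subtree_at T t \<subseteq> subtree_at T s"
  unfolding subtree_at_def using prefix_same_cases by fastforce

lemma prefix_of_subtree_at_long:
  assumes "prefix t b" "v \<in> subtree_at T b" "length t \<le> length v"
  shows "prefix t v"
proof -
  have "prefix v b \<or> prefix b v"
    using assms(2) unfolding subtree_at_def by blast
  then show ?thesis
    using assms(1,3) prefix_length_prefix prefix_order.trans by blast
qed

lemma subtree_at_nth_eq:
  assumes "w \<in> subtree_at T x" "k < length w" "k < length x"
  shows "x ! k = w ! k"
proof -
  have "prefix w x \<or> prefix x w"
    using assms(1) unfolding subtree_at_def by blast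
  then show ?thesis
    using assms(2,3) prefix_nth_eq by metis
qed

lemma inj_imp_unbounded_length:
  fixes f :: "nat \<Rightarrow> 'a::finite list"
  assumes "inj f"
  shows "\<exists>n. k < length (f n)"
proof -
  have "finite {xs :: 'a list. set xs \<subseteq> UNIV \<and> length xs \<le> k}"
    by (rule finite_lists_length_le) simp
  moreover have "infinite (range f)"
    using assms by (simp add: finite_image_iff)
  ultimately have "\<not> range f \<subseteq> {xs. set xs \<subseteq> UNIV \<and> length xs \<le> k}"
    using finite_subset by blast
  then show ?thesis
    by (auto simp: not_le)
qed

lemma splitting_tree_imp_perfect_tree:
  assumes "splitting_tree T"
  shows "perfect_tree T"
  unfolding perfect_tree_def
proof (intro conjI ballI)
  show "is_tree T"
    using assms unfolding splitting_tree_def by auto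
  fix s assume "s \<in> T"
  then have "fat (subtree_at T s)"
    using assms unfolding splitting_tree_def by auto
  then obtain m where "\<forall>n\<ge>m. \<forall>c. takes_value (subtree_at T s) n c"
    by (auto simp: fat_iff_takes_value)
  then have split: "takes_value (subtree_at T s) (max m (length s)) c" for c
    by simp
  obtain v w where
    v: "v \<in> subtree_at T s" "max m (length s) < length v" "v ! max m (length s) = False" and
    w: "w \<in> subtree_at T s" "max m (length s) < length w" "w ! max m (length s) = True"
    using split[of False] split[of True] unfolding takes_value_def by blast
  have "prefix s v" "prefix s w"
    using v w prefix_of_subtree_at_long[of s s] by auto
  moreover have "\<not> prefix v w" "\<not> prefix w v"
    using v w prefix_nth_eq by fastforce+
  ultimately show "\<exists>t\<in>T. \<exists>u\<in>T. prefix s t \<and> prefix s u \<and> \<not> prefix t u \<and> \<not> prefix u t"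
    using v w unfolding subtree_at_def by blast
qed

definition fat_threshold :: "bool list set \<Rightarrow> bool list \<Rightarrow> nat" where
  "fat_threshold T b = (LEAST m. \<forall>n\<ge>m. \<forall>c. takes_value (subtree_at T b) n c)"

lemma less_fat_threshold:
  assumes "splitting_tree T" "b \<in> T" "\<not> takes_value (subtree_at T b) k c"
  shows "k < fat_threshold T b"
proof -
  have "\<exists>m. \<forall>n\<ge>m. \<forall>c. takes_value (subtree_at T b) n c"
    using assms(1,2) by (auto simp: splitting_tree_def fat_iff_takes_value)
  then have "\<forall>n\<ge>fat_threshold T b. \<forall>c. takes_value (subtree_at T b) n c"
    unfolding fat_threshold_def by (rule LeastI_ex)
  with assms(3) show ?thesis
    by (meson not_less)
qed

definition value_witness :: "bool list set \<Rightarrow> nat \<Rightarrow> bool \<Rightarrow> bool list" where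
  "value_witness X k c = (SOME w. w \<in> X \<and> k < length w \<and> w ! k = c)"

lemma value_witness:
  assumes "takes_value X k c"
  shows "value_witness X k c \<in> X" "k < length (value_witness X k c)"
    "value_witness X k c ! k = c"
  using someI_ex[OF assms[unfolded takes_value_def Bex_def]]
  unfolding value_witness_def by auto

definition split_weight :: "bool list set \<Rightarrow> bool list \<Rightarrow> bool list \<Rightarrow> bool list set" where
  "split_weight T a b =
     (\<lambda>(u, k, c). value_witness (subtree_at T a \<inter> subtree_at T u - subtree_at T b) k c) `
       {(u, k, c). prefix u b \<and> k < fat_threshold T b \<and>
          takes_value (subtree_at T a \<inter> subtree_at T u - subtree_at T b) k c}"

lemma finite_split_weight: "finite (split_weight T a b)"
proof -
  have "{(u, k, c). prefix u b \<and> k < fat_threshold T b \<and>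
          takes_value (subtree_at T a \<inter> subtree_at T u - subtree_at T b) k c}
        \<subseteq> set (prefixes b) \<times> {..<fat_threshold T b} \<times> UNIV"
    by auto
  then show ?thesis
    unfolding split_weight_def by (meson finite_SigmaI finite_UNIV finite_imageI finite_lessThan
        finite_set finite_subset)
qed

lemma split_weight_subset: "split_weight T a b \<subseteq> subtree_at T a - subtree_at T b"
  unfolding split_weight_def using value_witness(1) by fastforce

lemma is_weight_split_weight: "splitting_tree T \<Longrightarrow> is_weight T (split_weight T)"
  unfolding is_weight_def
  using splitting_tree_imp_perfect_tree finite_split_weight split_weight_subset by blast

lemma takes_value_split_weight:
  assumes "prefix u b" "k < fat_threshold T b"
    "takes_value (subtree_at T a \<inter> subtree_at T u - subtree_at T b) k c"
  shows "takes_value (split_weight T a b \<inter> subtree_at T u) k c"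
proof -
  let ?w = "value_witness (subtree_at T a \<inter> subtree_at T u - subtree_at T b) k c"
  have "?w \<in> split_weight T a b"
    unfolding split_weight_def using assms by force
  then show ?thesis
    using value_witness[OF assms(3)] unfolding takes_value_def by blast
qed

lemma takes_value_split_weight_step:
  assumes T: "splitting_tree T" and b: "b \<in> subtree_at T t" and k: "length t \<le> k"
    and a: "takes_value (subtree_at T a \<inter> subtree_at T t) k c"
    and lost: "\<not> takes_value (subtree_at T b \<inter> subtree_at T t) k c"
  shows "takes_value (split_weight T a b \<inter> subtree_at T t) k c"
proof -
  have tb: "prefix t b"
  proof (rule ccontr)
    assume "\<not> prefix t b"
    then have "subtree_at T t \<subseteq> subtree_at T b"
      using b subtree_at_antimono unfolding subtree_at_def by blast
    then show False
      using a lost takes_value_mono by blast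
  qed
  have "\<not> takes_value (subtree_at T b) k c"
    using lost prefix_of_subtree_at_long[OF tb] k unfolding takes_value_def subtree_at_def
    by fastforce
  then have "k < fat_threshold T b"
    using T b by (auto simp: subtree_at_def intro: less_fat_threshold)
  moreover have "takes_value (subtree_at T a \<inter> subtree_at T t - subtree_at T b) k c"
    using a lost unfolding takes_value_def by blast
  ultimately show ?thesis
    using takes_value_split_weight[OF tb] by blast
qed

lemma takes_value_along_weight_chain:
  assumes T: "splitting_tree T" and "S \<subseteq> T" and k: "length t \<le> k"
    and f: "\<forall>n. f n \<in> subtree_at S t" "\<forall>n. split_weight T (f n) (f (Suc n)) \<subseteq> S"
    and start: "takes_value (subtree_at T (f 0) \<inter> subtree_at T t) k c"
  shows "takes_value (subtree_at T (f n) \<inter> subtree_at T t) k c \<or> takes_value (subtree_at S t) k c"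
proof (induction n)
  case 0
  then show ?case using start by blast
next
  case (Suc n)
  have sub: "split_weight T (f n) (f (Suc n)) \<inter> subtree_at T t \<subseteq> subtree_at S t"
    using f(2) unfolding subtree_at_def by blast
  have "f (Suc n) \<in> subtree_at T t"
    using f(1) \<open>S \<subseteq> T\<close> unfolding subtree_at_def by blast
  then show ?case
    using Suc takes_value_split_weight_step[OF T _ k] takes_value_mono[OF _ sub] by blast
qed

lemma fat_subtree_at_if_weight_chain:
  assumes T: "splitting_tree T" and "S \<subseteq> T" "t \<in> S"
    and f: "inj f" "f 0 = t" "\<forall>n. f n \<in> subtree_at S t"
      "\<forall>n. split_weight T (f n) (f (Suc n)) \<subseteq> S"
  shows "fat (subtree_at S t)"
proof -
  have "fat (subtree_at T t)"
    using T \<open>S \<subseteq> T\<close> \<open>t \<in> S\<close> unfolding splitting_tree_def by blast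
  then obtain m where m: "\<forall>k\<ge>m. \<forall>c. takes_value (subtree_at T t) k c"
    unfolding fat_iff_takes_value by blast
  have "takes_value (subtree_at S t) k c" if k: "max m (length t) \<le> k" for k c
  proof -
    obtain n where n: "k < length (f n)"
      using inj_imp_unbounded_length[OF f(1)] by blast
    have "takes_value (subtree_at T (f 0) \<inter> subtree_at T t) k c"
      using m k f(2) by auto
    then consider
        "takes_value (subtree_at T (f n) \<inter> subtree_at T t) k c"
      | "takes_value (subtree_at S t) k c"
      using takes_value_along_weight_chain[OF T \<open>S \<subseteq> T\<close> _ f(3,4)] k by fastforce
    then show ?thesis
    proof cases
      case 1
      then have "f n ! k = c"
        using n subtree_at_nth_eq unfolding takes_value_def by blast
      then show ?thesis
        using n f(3) unfolding takes_value_def by blast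
    qed
  qed
  then show ?thesis
    unfolding fat_iff_takes_value by blast
qed

theorem lemma4p10:
  shows "\<forall>T\<in>SP. \<exists>\<rho>. is_weight T \<rho> \<and> (\<forall>S. is_tree S \<and> weight_le S \<rho> T \<longrightarrow> S \<in> SP)"
proof
  fix T assume "T \<in> SP"
  then have T: "splitting_tree T"
    unfolding SP_def by simp
  have "S \<in> SP" if S: "is_tree S" "weight_le S (split_weight T) T" for S
  proof -
    have "fat (subtree_at S s)" if "s \<in> S" for s
    proof -
      obtain t f where t: "t \<in> S" "prefix s t" and f: "inj f" "f 0 = t"
          "\<forall>n. f n \<in> subtree_at S t" "\<forall>n. split_weight T (f n) (f (Suc n)) \<subseteq> S"
        using S(2) \<open>s \<in> S\<close> unfolding weight_le_def Let_def by blast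
      have "S \<subseteq> T"
        using S(2) unfolding weight_le_def by simp
      have "fat (subtree_at S t)"
        using T \<open>S \<subseteq> T\<close> t(1) f by (rule fat_subtree_at_if_weight_chain)
      then show ?thesis
        using subtree_at_antimono[OF t(2)] fat_mono by blast
    qed
    then show ?thesis
      using S(1) unfolding SP_def splitting_tree_def by simp
  qed
  then show "\<exists>\<rho>. is_weight T \<rho> \<and> (\<forall>S. is_tree S \<and> weight_le S \<rho> T \<longrightarrow> S \<in> SP)"
    using is_weight_split_weight[OF T] by blast
qed

end
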